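(* Let $g\geq 3$ and let $\eta$ be an integer with $2\leq\eta\leq g$. Then there exist non-negative integers $g_1$, $i$ and $j$ such that (1) $2g_1\geq g-2$; (2) $i+j+1=\eta$; (3) $i+2j+2g_1=2g-2$; (4) $\underbrace{\mathcal{M}_{0,3}\times\cdots\times\mathcal{M}_{0,3}}_{i\text{ copies}}\times\underbrace{\mathcal{M}_{1,2}\times\cdots\times\mathcal{M}_{1,2}}_{j\text{ copies}}\times\mathcal{M}_{g_1,2}\subset\partial\mathcal{M}_g$, i.e. a closed surface of genus $g$ can be pinched along disjoint simple closed curves to a nodal surface whose components are exactly $i$ thrice-punctured spheres, $j$ surfaces of genus $1$ with $2$ punctures and one surface of genus $g_1$ with $2$ punctures, each component being arbitrary in its moduli space.
   Context: $\mathcal{M}_{g,n}$ denotes the moduli space of complete finite-area hyperbolic surfaces of genus $g$ with $n$ punctures (cusps), $\mathcal{M}_g=\mathcal{M}_{g,0}$. $\partial\mathcal{M}_g$ is the boundary of the Deligne--Mumford compactification of $\mathcal{M}_g$; it is stratified, each stratum being a product of lower-dimensional moduli spaces $\mathcal{M}_{g_i,n_i}$, corresponding to the components of nodal surfaces obtained by pinching disjoint simple closed curves. *)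

theory Defs
  imports Main "HOL-Library.Multiset"
begin

text \<open>A stratum of the boundary of M_g is given by a stable (dual) graph: vertices are the
components of the nodal surface (each with its genus), edges are the nodes (pinched
curves; loops allowed); the component at vertex v lies in M_{gen v, valence v}.\<close>

definition valence :: "nat set \<Rightarrow> (nat \<Rightarrow> nat \<times> nat) \<Rightarrow> nat \<Rightarrow> nat" where
  "valence E ends v = card {e \<in> E. fst (ends e) = v} + card {e \<in> E. snd (ends e) = v}"

definition adjacent :: "nat set \<Rightarrow> (nat \<Rightarrow> nat \<times> nat) \<Rightarrow> nat \<Rightarrow> nat \<Rightarrow> bool" where
  "adjacent E ends a b \<longleftrightarrow> (\<exists>e\<in>E. ends e = (a, b) \<or> ends e = (b, a))"

definition stable_graph :: "nat set \<Rightarrow> nat set \<Rightarrow> (nat \<Rightarrow> nat \<times> nat) \<Rightarrow> (nat \<Rightarrow> nat) \<Rightarrow> bool" where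
  "stable_graph V E ends gen \<longleftrightarrow>
     finite V \<and> V \<noteq> {} \<and> finite E \<and>
     (\<forall>e\<in>E. fst (ends e) \<in> V \<and> snd (ends e) \<in> V) \<and>
     (\<forall>u\<in>V. \<forall>w\<in>V. (adjacent E ends)\<^sup>*\<^sup>* u w) \<and>
     (\<forall>v\<in>V. 2 * gen v + valence E ends v \<ge> 3)"

text \<open>Arithmetic genus of the graph: sum of vertex genera plus first Betti number.\<close>
definition graph_genus :: "nat set \<Rightarrow> nat set \<Rightarrow> (nat \<Rightarrow> nat) \<Rightarrow> int" where
  "graph_genus V E gen = int (\<Sum>v\<in>V. gen v) + int (card E) - int (card V) + 1"

text \<open>The product of moduli spaces M_{g_v,n_v}, listed by the multiset of types (g_v,n_v),
is a stratum of the boundary of the DM compactification of M_g.\<close>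
definition boundary_stratum :: "nat \<Rightarrow> (nat \<times> nat) multiset \<Rightarrow> bool" where
  "boundary_stratum g types \<longleftrightarrow>
     (\<exists>V E ends gen. stable_graph V E ends gen \<and> E \<noteq> {} \<and>
        graph_genus V E gen = int g \<and>
        image_mset (\<lambda>v. (gen v, valence E ends v)) (mset_set V) = types)"

end

theory Submission
  imports Defs
begin

text \<open>The stratum is realised by a necklace: a cycle of \<open>\<eta>\<close> vertices, where vertex 0 has
genus \<open>g1\<close>, the next \<open>i = 2k\<close> vertices have genus 0 and the last \<open>j\<close> vertices genus 1.
Doubling the link between the genus-0 vertices \<open>2m + 1\<close> and \<open>2m + 2\<close> for each \<open>m < k\<close>
makes exactly these vertices trivalent. The graph has first Betti number \<open>k + 1\<close>, hence
arithmetic genus \<open>g1 + j + k + 1\<close>. Choosing \<open>j \<in> {0, 1}\<close> of the parity that makes \<open>\<eta> - 1 - j\<close>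
even and \<open>g1 = g - 1 - j - k\<close> gives genus \<open>g\<close>, and \<open>\<eta> \<le> g\<close> yields \<open>2 g1 \<ge> g - 2\<close>.\<close>

lemma valence_Un_disjoint:
  assumes "finite E1" and "finite E2" and "E1 \<inter> E2 = {}"
  shows "valence (E1 \<union> E2) ends v = valence E1 ends v + valence E2 ends v"
proof -
  have split: "{e \<in> E1 \<union> E2. P e} = {e \<in> E1. P e} \<union> {e \<in> E2. P e}" for P
    by auto
  have "card {e \<in> E1 \<union> E2. P e} = card {e \<in> E1. P e} + card {e \<in> E2. P e}" for P
    unfolding split using assms by (intro card_Un_disjoint) auto
  then show ?thesis
    unfolding valence_def by simp
qed

lemma rtranclp_connected_if_successors_related:
  assumes "symp R" and "\<And>v. Suc v < n \<Longrightarrow> R v (Suc v)" and "u < n" and "w < n"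
  shows "R\<^sup>*\<^sup>* u w"
proof -
  have from_0: "R\<^sup>*\<^sup>* 0 v" if "v < n" for v
    using that by (induction v) (auto intro: rtranclp.rtrancl_into_rtrancl assms(2))
  have "symp R\<^sup>*\<^sup>*"
    using assms(1) by (rule symp_rtranclp)
  then show ?thesis
    using from_0 assms(3,4) by (meson rtranclp_trans sympD)
qed

definition necklace_ends :: "nat \<Rightarrow> nat \<Rightarrow> nat \<times> nat" where
  "necklace_ends n e = (if e < n then (e, (e + 1) mod n) else (2 * (e - n) + 1, 2 * (e - n) + 2))"

lemma valence_necklace_cycle:
  assumes "v < n"
  shows "valence {0..<n} (necklace_ends n) v = 2"
proof -
  have "{e \<in> {0..<n}. fst (necklace_ends n e) = v} = {v}"
    using assms by (auto simp: necklace_ends_def)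
  moreover have "{e \<in> {0..<n}. snd (necklace_ends n e) = v} = {(v + n - 1) mod n}"
  proof -
    have "(e + 1) mod n = v \<longleftrightarrow> e = (v + n - 1) mod n" if "e < n" for e
      using that assms by (cases "e + 1 = n"; cases "v = 0") (auto simp: mod_if)
    then show ?thesis
      using assms by (auto simp: necklace_ends_def)
  qed
  ultimately show ?thesis
    by (simp add: valence_def)
qed

lemma necklace_chords_from:
  "{e \<in> {n..<n + k}. fst (necklace_ends n e) = v} =
     (if odd v \<and> v < 2 * k then {n + v div 2} else {})"
proof -
  have "{e \<in> {n..<n + k}. fst (necklace_ends n e) = v} = {e \<in> {n..<n + k}. 2 * (e - n) + 1 = v}"
    by (auto simp: necklace_ends_def)
  also have "\<dots> = (if odd v \<and> v < 2 * k then {n + v div 2} else {})"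
    by (auto; presburger)
  finally show ?thesis .
qed

lemma necklace_chords_to:
  "{e \<in> {n..<n + k}. snd (necklace_ends n e) = v} =
     (if even v \<and> 2 \<le> v \<and> v \<le> 2 * k then {n + v div 2 - 1} else {})"
proof -
  have "{e \<in> {n..<n + k}. snd (necklace_ends n e) = v} = {e \<in> {n..<n + k}. 2 * (e - n) + 2 = v}"
    by (auto simp: necklace_ends_def)
  also have "\<dots> = (if even v \<and> 2 \<le> v \<and> v \<le> 2 * k then {n + v div 2 - 1} else {})"
    by (auto; presburger)
  finally show ?thesis .
qed

lemma valence_necklace_chords:
  "valence {n..<n + k} (necklace_ends n) v = (if 1 \<le> v \<and> v \<le> 2 * k then 1 else 0)"
  unfolding valence_def necklace_chords_from necklace_chords_to by simp presburger

lemma valence_necklace: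
  assumes "v < n"
  shows "valence {0..<n + k} (necklace_ends n) v = 2 + (if 1 \<le> v \<and> v \<le> 2 * k then 1 else 0)"
proof -
  have "{0..<n + k} = {0..<n} \<union> {n..<n + k}"
    by auto
  then show ?thesis
    using assms by (simp add: valence_Un_disjoint valence_necklace_cycle valence_necklace_chords)
qed

lemma necklace_connected:
  assumes "u < n" and "w < n"
  shows "(adjacent {0..<n + k} (necklace_ends n))\<^sup>*\<^sup>* u w"
proof (rule rtranclp_connected_if_successors_related[OF _ _ assms])
  show "symp (adjacent {0..<n + k} (necklace_ends n))"
    unfolding symp_def adjacent_def by blast
  show "adjacent {0..<n + k} (necklace_ends n) v (Suc v)" if "Suc v < n" for v
    unfolding adjacent_def using that by (intro bexI[of _ v]) (auto simp: necklace_ends_def)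
qed

lemma stable_graph_necklace:
  assumes "2 * k < n" and "\<And>v. v < n \<Longrightarrow> v = 0 \<or> 2 * k < v \<Longrightarrow> 1 \<le> gen v"
  shows "stable_graph {0..<n} {0..<n + k} (necklace_ends n) gen"
  unfolding stable_graph_def
proof (intro conjI ballI)
  show "finite {0..<n}" "{0..<n} \<noteq> {}" "finite {0..<n + k}"
    using assms(1) by auto
next
  fix e assume "e \<in> {0..<n + k}"
  then show "fst (necklace_ends n e) \<in> {0..<n}" "snd (necklace_ends n e) \<in> {0..<n}"
    using assms(1) by (auto simp: necklace_ends_def)
next
  fix u w assume "u \<in> {0..<n}" "w \<in> {0..<n}"
  then show "(adjacent {0..<n + k} (necklace_ends n))\<^sup>*\<^sup>* u w"
    by (simp add: necklace_connected)
next
  fix v assume "v \<in> {0..<n}"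
  then show "3 \<le> 2 * gen v + valence {0..<n + k} (necklace_ends n) v"
    using assms(2)[of v] by (auto simp: valence_necklace)
qed

lemma boundary_stratum_necklace:
  fixes g1 j k :: nat
  assumes "1 \<le> g1"
  shows "boundary_stratum (g1 + j + k + 1)
           (replicate_mset (2 * k) (0, 3) + replicate_mset j (1, 2) + {#(g1, 2)#})"
proof -
  define n where "n = 2 * k + j + 1"
  define gen where "gen v = (if v = 0 then g1 else if v \<le> 2 * k then 0 else 1)" for v :: nat
  have beads: "{0..<n} = insert 0 ({1..2 * k} \<union> {2 * k + 1..<n})"
    and disjoint: "{1..2 * k} \<inter> {2 * k + 1..<n} = {}"
    unfolding n_def by auto
  have "stable_graph {0..<n} {0..<n + k} (necklace_ends n) gen"
    using assms by (intro stable_graph_necklace) (auto simp: n_def gen_def)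
  moreover have "graph_genus {0..<n} {0..<n + k} gen = int (g1 + j + k + 1)"
  proof -
    have "(\<Sum>v\<in>{0..<n}. gen v) = g1 + j"
      unfolding beads using disjoint by (simp add: sum.union_disjoint gen_def n_def)
    then show ?thesis
      unfolding graph_genus_def n_def by simp
  qed
  moreover have "image_mset (\<lambda>v. (gen v, valence {0..<n + k} (necklace_ends n) v)) (mset_set {0..<n})
      = replicate_mset (2 * k) (0, 3) + replicate_mset j (1, 2) + {#(g1, 2)#}"
    (is "image_mset ?type _ = _")
  proof -
    have "?type v = (0, 3)" if "v \<in> {1..2 * k}" for v
    proof -
      have "v < n"
        using that by (simp add: n_def)
      with that show ?thesis
        by (simp add: gen_def valence_necklace)
    qed
    then have "image_mset ?type (mset_set {1..2 * k}) = image_mset (\<lambda>_. (0, 3)) (mset_set {1..2 * k})"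
      by (intro image_mset_cong) simp
    moreover have "?type v = (1, 2)" if "v \<in> {2 * k + 1..<n}" for v
      using that by (simp add: gen_def valence_necklace)
    then have "image_mset ?type (mset_set {2 * k + 1..<n}) =
        image_mset (\<lambda>_. (1, 2)) (mset_set {2 * k + 1..<n})"
      by (intro image_mset_cong) simp
    moreover have "?type 0 = (g1, 2)"
      using valence_necklace[of 0 n k] by (simp add: gen_def n_def)
    ultimately show ?thesis
      unfolding beads using disjoint by (simp add: mset_set_Union image_mset_const_eq n_def)
  qed
  moreover have "{0..<n + k} \<noteq> {}"
    by (simp add: n_def)
  ultimately show ?thesis
    unfolding boundary_stratum_def by blast
qed

theorem lemma2p4:
  fixes g \<eta> :: nat
  assumes "g \<ge> 3" and "2 \<le> \<eta>" and "\<eta> \<le> g"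
  shows "\<exists>g1 i j :: nat. 2 * g1 \<ge> g - 2 \<and> i + j + 1 = \<eta> \<and> i + 2 * j + 2 * g1 = 2 * g - 2 \<and>
           boundary_stratum g (replicate_mset i (0, 3) + replicate_mset j (1, 2) + {#(g1, 2)#})"
proof -
  define j :: nat where "j = (if odd \<eta> then 0 else 1)"
  define k where "k = (\<eta> - 1 - j) div 2"
  define g1 where "g1 = g - 1 - j - k"
  have \<eta>_eq: "2 * k + j + 1 = \<eta>"
    using assms(2) unfolding k_def j_def by auto
  have g_eq: "g1 + j + k + 1 = g" and "1 \<le> g1"
    using assms \<eta>_eq unfolding g1_def j_def by auto
  then have "boundary_stratum g (replicate_mset (2 * k) (0, 3) + replicate_mset j (1, 2) + {#(g1, 2)#})"
    using boundary_stratum_necklace by metis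
  moreover have "2 * g1 \<ge> g - 2" and "2 * k + 2 * j + 2 * g1 = 2 * g - 2"
    using assms \<eta>_eq g_eq unfolding j_def by auto
  ultimately show ?thesis
    using \<eta>_eq by blast
qed

end
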